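(* Fix $k, n \in \mathbb{N}$. The number of permutations $w \in S_{kn+k-1}$ with exactly $n$ descents such that ${\rm ad}(w)$ is a $(k-1)$-ballot sequence equals $\frac{1}{n+1} A_{n,kn+k-1}$. In particular, the number of Dyck permutations in $S_{2n+1}$ is the Eulerian-Catalan number $EC_n = \frac{1}{n+1}A_{n,2n+1}$.
   Context: $A_{m,n}$ denotes the Eulerian number: the number of permutations of $[n]$ with exactly $m$ descents. For a permutation $w = w_1\cdots w_m$, ${\rm ad}(w)$ is the $0/1$ sequence of length $m-1$ with ${\rm ad}(w)_i = 0$ if $w_i < w_{i+1}$ and $1$ if $w_i > w_{i+1}$. A $0/1$ sequence is an $r$-ballot sequence if every initial segment contains at least $r$ times as many $0$'s as $1$'s. A permutation $w \in S_{2n+1}$ is a Dyck permutation if the lattice path $L(w)$ — starting at $(0,0)$, with $i$-th step $(1,0)$ if $w_i<w_{i+1}$ and $(0,1)$ if $w_i>w_{i+1}$ — ends at $(n,n)$ and all its points satisfy $y \leq x$ (equivalently, $w$ has $n$ descents and ${\rm ad}(w)$ is a $1$-ballot sequence). *)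

theory Defs
  imports Complex_Main
begin

definition perms :: "nat \<Rightarrow> nat list set" where
  "perms m = {w. distinct w \<and> set w = {1..m}}"

definition ad :: "nat list \<Rightarrow> nat list" where
  "ad w = map (\<lambda>i. if w ! i < w ! (i + 1) then 0 else 1) [0..<length w - 1]"

definition des :: "nat list \<Rightarrow> nat" where
  "des w = card {i. i + 1 < length w \<and> w ! i > w ! (i + 1)}"

definition eulerian :: "nat \<Rightarrow> nat \<Rightarrow> nat" where
  "eulerian m n = card {w \<in> perms n. des w = m}"

definition ballot :: "nat \<Rightarrow> nat list \<Rightarrow> bool" where
  "ballot r s \<longleftrightarrow> (\<forall>j \<le> length s.
      r * count_list (take j s) 1 \<le> count_list (take j s) 0)"

text \<open>Points of the lattice path L(w): after j steps, x = number of ascents and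
  y = number of descents among the first j adjacent pairs.\<close>
definition path_point :: "nat list \<Rightarrow> nat \<Rightarrow> nat \<times> nat" where
  "path_point w j = (count_list (take j (ad w)) 0, count_list (take j (ad w)) 1)"

definition dyck_perm :: "nat \<Rightarrow> nat list \<Rightarrow> bool" where
  "dyck_perm n w \<longleftrightarrow> w \<in> perms (2 * n + 1)
     \<and> path_point w (length (ad w)) = (n, n)
     \<and> (\<forall>j \<le> length (ad w). snd (path_point w j) \<le> fst (path_point w j))"

end

theory Submission
  imports Defs
begin

text \<open>
  Prefixing 0 turns a permutation \<open>w\<close> of \<open>[m]\<close>, \<open>m = kn + k - 1\<close>, into a cyclic
  arrangement \<open>c = 0w\<close> of \<open>{0, ..., N - 1}\<close> with \<open>N = k(n + 1)\<close>; the descents of \<open>w\<close>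
  together with the wrap-around step back to 0 are the \<open>n + 1\<close> cyclic descents of \<open>c\<close>.
  For the height \<open>h t = t - k \<cdot> #(cyclic descents among the first t steps)\<close>, which is
  \<open>N\<close>-periodic, \<open>ad w\<close> is \<open>(k - 1)\<close>-ballot iff \<open>h t > 0\<close> for all \<open>0 < t < N\<close>.

  The cyclic group of order \<open>N\<close> acts on arrangements with leading 0: rotate \<open>c\<close> to start
  at position \<open>p\<close> and subtract \<open>c\<^sub>p\<close> from every entry modulo \<open>N\<close>. This keeps the number
  of cyclic descents, and the height of the shifted arrangement is \<open>h (p + t) - h p\<close>,
  corrected by \<open>k\<close> where the entries wrap around below \<open>c\<^sub>p\<close>. A cycle lemma shows that
  exactly \<open>k\<close> of the \<open>N\<close> shifts of every arrangement satisfy the ballot condition, so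
  double counting gives \<open>N \<cdot> #ballot = k \<cdot> #all\<close>, i.e. \<open>(n + 1) \<cdot> #ballot = A\<^sub>n\<^sub>,\<^sub>m\<close>.
\<close>

lemma card_Collect_bij_betw:
  assumes "bij_betw f A B"
  shows "card {x \<in> A. P (f x)} = card {y \<in> B. P y}"
proof (rule bij_betw_same_card)
  show "bij_betw f {x \<in> A. P (f x)} {y \<in> B. P y}"
    using assms by (auto simp: bij_betw_def inj_on_def)
qed

lemma window_min_Suc:
  fixes f :: "nat \<Rightarrow> int"
  assumes k: "k \<ge> 1"
    and shift: "\<And>x. f (x + N) = f x + int k"
    and up: "\<exists>x\<in>{j<..<j + N}. f x = f j + 1"
  shows "Min (f ` {Suc j..<Suc j + N})
           = Min (f ` {j..<j + N}) + of_bool (\<forall>x\<in>{j<..<j + N}. f j < f x)"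
proof -
  define R where "R = f ` {j<..<j + N}"
  obtain x0 where x0: "x0 \<in> {j<..<j + N}" "f x0 = f j + 1" using up by blast
  have "f x0 \<in> R" unfolding R_def using x0(1) by (rule imageI)
  then have R: "finite R" "R \<noteq> {}" "f x0 \<in> R" by (auto simp: R_def)
  have "{j..<j + N} = insert j {j<..<j + N}" "{Suc j..<Suc j + N} = insert (j + N) {j<..<j + N}"
    using x0 by auto
  then have M: "Min (f ` {j..<j + N}) = min (f j) (Min R)"
    and M': "Min (f ` {Suc j..<Suc j + N}) = min (f j + int k) (Min R)"
    using R by (simp_all add: R_def shift)
  show ?thesis
  proof (cases "\<forall>x\<in>{j<..<j + N}. f j < f x")
    case True
    then have "f j < Min R" using R by (auto simp: R_def)
    moreover have "Min R \<le> f j + 1" using R x0 by (metis Min_le)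
    ultimately show ?thesis using True M M' k by simp
  next
    case False
    then have "Min R \<le> f j" using R by (force simp: R_def intro: order_trans[OF Min_le])
    then show ?thesis using False M M' by simp
  qed
qed

text \<open>The window minimum goes up by one exactly at the records and by \<open>k\<close> over a full period.\<close>

lemma card_window_minima:
  fixes f :: "nat \<Rightarrow> int"
  assumes k: "k \<ge> 1" and N: "N > 0"
    and shift: "\<And>x. f (x + N) = f x + int k"
    and up: "\<And>j. j < N \<Longrightarrow> \<exists>x\<in>{j<..<j + N}. f x = f j + 1"
  shows "card {j. j < N \<and> (\<forall>x\<in>{j<..<j + N}. f j < f x)} = k"
proof -
  define M where "M j = Min (f ` {j..<j + N})" for j
  have "{N..<N + N} = (\<lambda>x. x + N) ` {0..<N}" by simp
  then have "f ` {N..<N + N} = (\<lambda>y. y + int k) ` f ` {0..<N}"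
    by (simp only: image_image shift)
  then have "M N = M 0 + int k"
    unfolding M_def using N by (simp add: mono_Min_commute[symmetric] mono_def)
  then have "int k = (\<Sum>j<N. M (Suc j) - M j)" by (simp add: sum_lessThan_telescope)
  also have "\<dots> = (\<Sum>j<N. of_bool (\<forall>x\<in>{j<..<j + N}. f j < f x))"
    unfolding M_def using window_min_Suc[OF k shift up] by (intro sum.cong) auto
  also have "\<dots> = int (card {j. j < N \<and> (\<forall>x\<in>{j<..<j + N}. f j < f x)})"
    by (simp add: sum.If_cases lessThan_def Collect_conj_eq[symmetric] Int_commute)
  finally show ?thesis by simp
qed

lemma card_cyclic_records:
  fixes a :: "nat \<Rightarrow> int"
  assumes k: "k \<ge> 1" and N: "N > 0"
    and succ: "\<And>j. j < N \<Longrightarrow> \<exists>i<N. i \<noteq> j \<and> a i = a j + 1 - int k * of_bool (i < j)"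
  shows "card {j. j < N \<and> (\<forall>u<N. u \<noteq> j \<longrightarrow> a j < a u + int k * of_bool (u < j))} = k"
proof -
  \<comment> \<open>Records of \<open>a\<close> are the strict window minima of its extension \<open>f\<close>, which gains \<open>k\<close>
      per period; \<open>lift j u\<close> is the representative of \<open>u\<close> in the window after \<open>j\<close>.\<close>
  define f where "f x = a (x mod N) + int k * int (x div N)" for x
  define lift where "lift j u = (if u < j then u + N else u)" for j u
  have shift: "f (x + N) = f x + int k" for x
    using N by (simp add: f_def algebra_simps)
  have f_lift: "f (lift j u) = a u + int k * of_bool (u < j)" if "u < N" for j u
    using that by (simp add: f_def lift_def)
  have f_low: "f j = a j" if "j < N" for j
    using that by (simp add: f_def)
  have lift_window: "lift j u \<in> {j<..<j + N} \<longleftrightarrow> u \<noteq> j" if "u < N" "j < N" for j u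
    using that by (auto simp: lift_def)
  have window_lift: "\<exists>u<N. x = lift j u" if "x \<in> {j<..<j + N}" "j < N" for j x
  proof (cases "x < N")
    case True
    then show ?thesis using that by (intro exI[of _ x]) (simp add: lift_def)
  next
    case False
    then show ?thesis using that by (intro exI[of _ "x - N"]) (auto simp: lift_def)
  qed
  have "card {j. j < N \<and> (\<forall>x\<in>{j<..<j + N}. f j < f x)} = k"
  proof (rule card_window_minima[where f = f, OF k N shift])
    fix j assume j: "j < N"
    then obtain i where "i < N" "i \<noteq> j" "a i = a j + 1 - int k * of_bool (i < j)"
      using succ by blast
    then show "\<exists>x\<in>{j<..<j + N}. f x = f j + 1"
      using j f_lift[of i j] lift_window[of i j] f_low[of j] by (intro bexI[of _ "lift j i"]) simp_all
  qed
  moreover have "(\<forall>x\<in>{j<..<j + N}. f j < f x)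
      \<longleftrightarrow> (\<forall>u<N. u \<noteq> j \<longrightarrow> a j < a u + int k * of_bool (u < j))" if j: "j < N" for j
  proof
    assume min: "\<forall>x\<in>{j<..<j + N}. f j < f x"
    show "\<forall>u<N. u \<noteq> j \<longrightarrow> a j < a u + int k * of_bool (u < j)"
    proof (intro allI impI)
      fix u assume "u < N" "u \<noteq> j"
      then have "f j < f (lift j u)" using min lift_window j by blast
      then show "a j < a u + int k * of_bool (u < j)" using f_lift[of u j] \<open>u < N\<close> f_low[OF j] by simp
    qed
  next
    assume rec: "\<forall>u<N. u \<noteq> j \<longrightarrow> a j < a u + int k * of_bool (u < j)"
    show "\<forall>x\<in>{j<..<j + N}. f j < f x"
    proof
      fix x assume x: "x \<in> {j<..<j + N}"
      then obtain u where u: "u < N" "x = lift j u" using window_lift j by blast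
      then have "u \<noteq> j" using lift_window x j by blast
      then show "f j < f x" using rec u f_lift[of u j] f_low[OF j] by simp
    qed
  qed
  ultimately show ?thesis by (simp cong: conj_cong)
qed

definition perms0 :: "nat \<Rightarrow> nat list set" where
  "perms0 N = {c. distinct c \<and> set c = {..<N}}"

definition cyc_nth :: "nat list \<Rightarrow> nat \<Rightarrow> nat" where
  "cyc_nth c i = c ! (i mod length c)"

definition cyc_descent :: "nat list \<Rightarrow> nat \<Rightarrow> bool" where
  "cyc_descent c i \<longleftrightarrow> cyc_nth c (Suc i) < cyc_nth c i"

definition cyc_des_upto :: "nat list \<Rightarrow> nat \<Rightarrow> nat" where
  "cyc_des_upto c x = (\<Sum>i<x. of_bool (cyc_descent c i))"

definition cyc_des :: "nat list \<Rightarrow> nat" where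
  "cyc_des c = cyc_des_upto c (length c)"

definition height :: "nat \<Rightarrow> nat list \<Rightarrow> nat \<Rightarrow> int" where
  "height k c x = int x - int k * int (cyc_des_upto c x)"

definition cyc_ballot :: "nat \<Rightarrow> nat list \<Rightarrow> bool" where
  "cyc_ballot k c \<longleftrightarrow> (\<forall>t\<in>{0<..<length c}. 0 < height k c t)"

lemma perms0_length: "c \<in> perms0 N \<Longrightarrow> length c = N"
  unfolding perms0_def by (metis (mono_tags) mem_Collect_eq distinct_card card_lessThan)

lemma perms0_bij_betw_nth:
  assumes "c \<in> perms0 N"
  shows "bij_betw (nth c) {..<N} {..<N}"
  using assms perms0_length[OF assms] unfolding perms0_def
  by (metis (mono_tags) bij_betw_nth lessThan_atLeast0 mem_Collect_eq)

lemma perms0_nth_less: "c \<in> perms0 N \<Longrightarrow> i < N \<Longrightarrow> c ! i < N"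
  using perms0_bij_betw_nth by (blast dest: bij_betw_apply)

lemma cyc_nth_less: "c \<in> perms0 N \<Longrightarrow> 0 < N \<Longrightarrow> cyc_nth c i < N"
  unfolding cyc_nth_def by (simp add: perms0_length perms0_nth_less)

lemma cyc_nth_add_length [simp]: "cyc_nth c (i + length c) = cyc_nth c i"
  unfolding cyc_nth_def by simp

lemma cyc_des_upto_Suc: "cyc_des_upto c (Suc x) = cyc_des_upto c x + of_bool (cyc_descent c x)"
  unfolding cyc_des_upto_def by simp

lemma cyc_des_upto_add_length: "cyc_des_upto c (x + length c) = cyc_des_upto c x + cyc_des c"
proof (induction x)
  case (Suc x)
  have "cyc_descent c (x + length c) = cyc_descent c x"
    unfolding cyc_descent_def using cyc_nth_add_length[of c "Suc x"] by simp
  then show ?case using Suc by (simp add: cyc_des_upto_Suc)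
qed (simp add: cyc_des_def cyc_des_upto_def)

lemma height_Suc: "height k c (Suc x) = height k c x + 1 - int k * of_bool (cyc_descent c x)"
  unfolding height_def cyc_des_upto_Suc by (simp add: algebra_simps)

lemma height_mod:
  assumes "length c = k * cyc_des c"
  shows "height k c (x mod length c) = height k c x"
proof -
  have "height k c (y + length c * j) = height k c y" for y j
  proof (induction j)
    case (Suc j)
    have "height k c (y + length c * Suc j) = height k c (y + length c * j + length c)"
      by (simp add: algebra_simps)
    also have "\<dots> = height k c (y + length c * j)"
      unfolding height_def cyc_des_upto_add_length using assms by (simp add: algebra_simps)
    finally show ?case using Suc by simp
  qed simp
  from this[of "x mod length c" "x div length c"] show ?thesis by simp
qed

lemma card_height_records:
  assumes c: "c \<in> perms0 N" and N: "N \<ge> 2" "N = k * cyc_des c" and k: "k \<ge> 1"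
  shows "card {p. p < N \<and> (\<forall>q<N. q \<noteq> p \<longrightarrow>
            height k c p < height k c q + int k * of_bool (c ! q < c ! p))} = k"
proof -
  have bij: "bij_betw (nth c) {..<N} {..<N}" using perms0_bij_betw_nth[OF c] .
  define pos where "pos = the_inv_into {..<N} (nth c)"
  have pos: "pos j < N" "c ! pos j = j" if "j < N" for j
    using that bij_betw_apply[OF bij_betw_the_inv_into[OF bij]] f_the_inv_into_f_bij_betw[OF bij]
    unfolding pos_def by auto
  have pos_nth: "pos (c ! p) = p" if "p < N" for p
    using that bij unfolding pos_def by (simp add: bij_betw_def the_inv_into_f_f)
  \<comment> \<open>Indexed by values rather than positions, the heights form a cyclic record problem.\<close>
  define a where "a j = height k c (pos j)" for j
  define is_record where "is_record j \<longleftrightarrow> (\<forall>u<N. u \<noteq> j \<longrightarrow> a j < a u + int k * of_bool (u < j))" for j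
  have "card {j. j < N \<and> is_record j} = k"
    unfolding is_record_def
  proof (rule card_cyclic_records[OF k])
    show "0 < N" using N(1) by simp
    fix j assume j: "j < N"
    define q where "q = Suc (pos j) mod N"
    have q: "q < N" "q \<noteq> pos j" using N(1) pos[OF j] unfolding q_def
      by (auto simp: mod_Suc split: if_splits)
    have "a (c ! q) = height k c (Suc (pos j))"
      using height_mod[of c k "Suc (pos j)"] N perms0_length[OF c] pos_nth[OF q(1)]
      by (simp add: a_def q_def)
    also have "\<dots> = a j + 1 - int k * of_bool (c ! q < j)"
      using pos[OF j] perms0_length[OF c]
      by (simp add: height_Suc a_def cyc_descent_def cyc_nth_def q_def)
    finally show "\<exists>i<N. i \<noteq> j \<and> a i = a j + 1 - int k * of_bool (i < j)"
      using q pos[OF j] perms0_nth_less[OF c q(1)]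
      by (metis bij bij_betw_imp_inj_on inj_on_eq_iff lessThan_iff)
  qed
  moreover have "is_record (c ! p)
      \<longleftrightarrow> (\<forall>q<N. q \<noteq> p \<longrightarrow> height k c p < height k c q + int k * of_bool (c ! q < c ! p))"
    if "p < N" for p
    using that pos pos_nth perms0_nth_less[OF c] unfolding is_record_def a_def by metis
  then have "{p \<in> {..<N}. is_record (c ! p)} = {p. p < N \<and> (\<forall>q<N. q \<noteq> p \<longrightarrow>
      height k c p < height k c q + int k * of_bool (c ! q < c ! p))}"
    by blast
  ultimately show ?thesis
    using card_Collect_bij_betw[OF bij, of is_record] by (simp add: lessThan_def)
qed

definition mod_sub :: "nat \<Rightarrow> nat \<Rightarrow> nat \<Rightarrow> nat" where
  "mod_sub N x y = (x + N - y) mod N"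

lemma mod_sub_less: "0 < N \<Longrightarrow> mod_sub N x y < N"
  unfolding mod_sub_def by simp

lemma mod_sub_self [simp]: "mod_sub N x x = 0"
  unfolding mod_sub_def by simp

lemma mod_sub_0 [simp]: "x < N \<Longrightarrow> mod_sub N x 0 = x"
  unfolding mod_sub_def by simp

lemma mod_sub_eq_diff: "y \<le> x \<Longrightarrow> x < N \<Longrightarrow> mod_sub N x y = x - y"
proof -
  assume "y \<le> x" "x < N"
  then have "x + N - y = (x - y) + N" "x - y < N" by linarith+
  then show ?thesis unfolding mod_sub_def by (metis mod_add_self2 mod_less)
qed

lemma mod_sub_eq_add_diff: "x < y \<Longrightarrow> y < N \<Longrightarrow> mod_sub N x y = x + N - y"
  unfolding mod_sub_def by (intro mod_less) linarith

lemma int_mod_sub: "x < N \<Longrightarrow> y < N \<Longrightarrow> int (mod_sub N x y) = (int x - int y) mod int N"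
proof -
  assume "x < N" "y < N"
  then have "int (x + N - y) = (int x - int y) + int N" by simp
  then show ?thesis unfolding mod_sub_def by (simp add: zmod_int)
qed

lemma mod_sub_inj: "x < N \<Longrightarrow> y < N \<Longrightarrow> v < N \<Longrightarrow> mod_sub N x v = mod_sub N y v \<Longrightarrow> x = y"
  by (cases "x < v"; cases "y < v") (auto simp: mod_sub_eq_diff mod_sub_eq_add_diff)

lemma mod_sub_less_iff:
  assumes "x < N" "y < N" "v < N"
  shows "(of_bool (mod_sub N y v < mod_sub N x v) :: int)
           = of_bool (y < x) - of_bool (y < v) + of_bool (x < v)"
  using assms by (cases "x < v"; cases "y < v") (auto simp: mod_sub_eq_diff mod_sub_eq_add_diff)

lemma mod_sub_mod_sub:
  assumes "x < N" "y < N" "z < N"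
  shows "mod_sub N (mod_sub N x y) (mod_sub N z y) = mod_sub N x z"
proof -
  have "int (mod_sub N (mod_sub N x y) (mod_sub N z y))
      = ((int x - int y) mod int N - (int z - int y) mod int N) mod int N"
    using assms by (simp add: int_mod_sub mod_sub_less)
  also have "\<dots> = int (mod_sub N x z)"
    using assms by (simp add: int_mod_sub mod_diff_eq)
  finally show ?thesis by simp
qed

definition cyc_shift :: "nat \<Rightarrow> nat list \<Rightarrow> nat list" where
  "cyc_shift p c = map (\<lambda>x. mod_sub (length c) x (c ! p)) (rotate p c)"

lemma all_rotate_mod_iff:
  fixes p N :: nat
  assumes "p < N"
  shows "(\<forall>t\<in>{0<..<N}. P ((p + t) mod N)) \<longleftrightarrow> (\<forall>q<N. q \<noteq> p \<longrightarrow> P q)"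
proof
  assume "\<forall>t\<in>{0<..<N}. P ((p + t) mod N)"
  moreover have "\<exists>t\<in>{0<..<N}. q = (p + t) mod N" if "q < N" "q \<noteq> p" for q
    using that assms
    by (intro bexI[of _ "if p \<le> q then q - p else q + N - p"]) auto
  ultimately show "\<forall>q<N. q \<noteq> p \<longrightarrow> P q" by blast
next
  assume all: "\<forall>q<N. q \<noteq> p \<longrightarrow> P q"
  have "(p + t) mod N \<noteq> p" if "t \<in> {0<..<N}" for t
    using that assms by (cases "p + t < N") (auto simp: le_mod_geq)
  then show "\<forall>t\<in>{0<..<N}. P ((p + t) mod N)" using all assms by simp
qed

context
  fixes c :: "nat list" and N p :: nat
  assumes c: "c \<in> perms0 N" and p: "p < N"
begin

lemma length_cyc_shift: "length (cyc_shift p c) = N"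
  unfolding cyc_shift_def using perms0_length[OF c] by simp

lemma nth_cyc_shift: "i < N \<Longrightarrow> cyc_shift p c ! i = mod_sub N (c ! ((p + i) mod N)) (c ! p)"
  unfolding cyc_shift_def using perms0_length[OF c] by (simp add: nth_rotate)

lemma nth_0_cyc_shift: "cyc_shift p c ! 0 = 0"
  using nth_cyc_shift[of 0] p by simp

lemma cyc_shift_in_perms0: "cyc_shift p c \<in> perms0 N"
proof -
  let ?f = "\<lambda>x. mod_sub N x (c ! p)"
  have cp: "c ! p < N" using perms0_nth_less[OF c p] .
  have inj: "inj_on ?f {..<N}"
    using mod_sub_inj[OF _ _ cp] by (auto intro: inj_onI)
  have "?f ` {..<N} \<subseteq> {..<N}" using mod_sub_less p by auto
  then have "?f ` {..<N} = {..<N}" using endo_inj_surj[OF _ _ inj] by simp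
  then show ?thesis
    using c inj perms0_length[OF c] unfolding perms0_def cyc_shift_def by (simp add: distinct_map)
qed

lemma cyc_nth_cyc_shift: "cyc_nth (cyc_shift p c) i = mod_sub N (cyc_nth c (p + i)) (c ! p)"
proof -
  have "cyc_nth (cyc_shift p c) i = mod_sub N (c ! ((p + i mod N) mod N)) (c ! p)"
    unfolding cyc_nth_def length_cyc_shift using p by (simp add: nth_cyc_shift)
  then show ?thesis unfolding cyc_nth_def perms0_length[OF c] by (simp add: mod_add_right_eq)
qed

lemma cyc_des_upto_cyc_shift:
  "int (cyc_des_upto (cyc_shift p c) t)
     = int (cyc_des_upto c (p + t)) - int (cyc_des_upto c p) - of_bool (cyc_nth c (p + t) < c ! p)"
proof (induction t)
  case 0
  then show ?case using p perms0_length[OF c] by (simp add: cyc_des_upto_def cyc_nth_def)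
next
  case (Suc t)
  have "cyc_nth c i < N" for i using cyc_nth_less[OF c] p by simp
  then have "(of_bool (cyc_descent (cyc_shift p c) t) :: int)
      = of_bool (cyc_descent c (p + t)) - of_bool (cyc_nth c (Suc (p + t)) < c ! p)
        + of_bool (cyc_nth c (p + t) < c ! p)"
    unfolding cyc_descent_def cyc_nth_cyc_shift
    using mod_sub_less_iff perms0_nth_less[OF c p] by simp
  then show ?case using Suc by (simp add: cyc_des_upto_Suc)
qed

lemma cyc_des_cyc_shift: "cyc_des (cyc_shift p c) = cyc_des c"
proof -
  have "cyc_nth c (p + N) = c ! p"
    using p perms0_length[OF c] cyc_nth_add_length[of c p] by (simp add: cyc_nth_def)
  then have "int (cyc_des (cyc_shift p c)) = int (cyc_des c)"
    using cyc_des_upto_cyc_shift[of N] cyc_des_upto_add_length[of c p] perms0_length[OF c]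
    by (simp add: cyc_des_def length_cyc_shift)
  then show ?thesis by simp
qed

lemma height_cyc_shift:
  "height k (cyc_shift p c) t
     = height k c (p + t) - height k c p + int k * of_bool (cyc_nth c (p + t) < c ! p)"
  unfolding height_def cyc_des_upto_cyc_shift by (simp add: algebra_simps)

lemma cyc_ballot_cyc_shift_iff:
  assumes N: "N = k * cyc_des c"
  shows "cyc_ballot k (cyc_shift p c)
           \<longleftrightarrow> (\<forall>q<N. q \<noteq> p \<longrightarrow> height k c p < height k c q + int k * of_bool (c ! q < c ! p))"
proof -
  have pos_iff: "0 < height k (cyc_shift p c) t
      \<longleftrightarrow> height k c p < height k c ((p + t) mod N) + int k * of_bool (c ! ((p + t) mod N) < c ! p)"
    for t
    using height_mod[of c k "p + t"] N perms0_length[OF c]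
    by (auto simp: height_cyc_shift cyc_nth_def)
  show ?thesis
    unfolding cyc_ballot_def length_cyc_shift pos_iff by (rule all_rotate_mod_iff[OF p])
qed

end

lemma cyc_shift_cyc_shift:
  assumes c: "c \<in> perms0 N" and p: "p < N" and c0: "c ! 0 = 0"
  shows "cyc_shift ((N - p) mod N) (cyc_shift p c) = c"
proof (rule nth_equalityI)
  define p' where "p' = (N - p) mod N"
  have p': "p' < N" "(p' + p) mod N = 0"
    using p unfolding p'_def by (auto simp: mod_if)
  have shift_c: "cyc_shift p c \<in> perms0 N" using cyc_shift_in_perms0[OF c p] .
  show "length (cyc_shift p' (cyc_shift p c)) = length c"
    using length_cyc_shift[OF shift_c p'(1)] perms0_length[OF c] by simp
  fix i assume "i < length (cyc_shift p' (cyc_shift p c))"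
  then have i: "i < N" using length_cyc_shift[OF shift_c p'(1)] by simp
  have "(p + (p' + i) mod N) mod N = ((p' + p) mod N + i) mod N"
    by (simp add: mod_add_right_eq mod_add_left_eq algebra_simps)
  then have "(p + (p' + i) mod N) mod N = i" using p'(2) i by simp
  moreover have "(p + p') mod N = 0" using p'(2) by (simp add: add.commute)
  ultimately have "cyc_shift p' (cyc_shift p c) ! i
      = mod_sub N (mod_sub N (c ! i) (c ! p)) (mod_sub N 0 (c ! p))"
    using nth_cyc_shift[OF shift_c p'(1) i] nth_cyc_shift[OF c p] p' c0 i by simp
  also have "\<dots> = c ! i"
    using perms0_nth_less[OF c] i p by (simp add: mod_sub_mod_sub)
  finally show "cyc_shift p' (cyc_shift p c) ! i = c ! i" .
qed

lemma sum_card_Collect_swap: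
  assumes "finite A" "finite B"
  shows "(\<Sum>a\<in>A. card {b \<in> B. P a b}) = (\<Sum>b\<in>B. card {a \<in> A. P a b})"
proof -
  have "(\<Sum>a\<in>A. card {b \<in> B. P a b}) = (\<Sum>a\<in>A. \<Sum>b\<in>B. of_bool (P a b))"
    using assms(2) by (simp add: Int_def)
  also have "\<dots> = (\<Sum>b\<in>B. \<Sum>a\<in>A. of_bool (P a b))" by (rule sum.swap)
  also have "\<dots> = (\<Sum>b\<in>B. card {a \<in> A. P a b})" using assms(1) by (simp add: Int_def)
  finally show ?thesis .
qed

lemma bij_betw_cyc_shift:
  assumes p: "p < N"
  shows "bij_betw (cyc_shift p) {c \<in> perms0 N. c ! 0 = 0 \<and> cyc_des c = D}
           {c \<in> perms0 N. c ! 0 = 0 \<and> cyc_des c = D}"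
proof (rule bij_betw_byWitness[where f' = "cyc_shift ((N - p) mod N)"])
  have q: "(N - p) mod N < N" "(N - (N - p) mod N) mod N = p"
    using p by (auto simp: mod_if)
  show "\<forall>c\<in>{c \<in> perms0 N. c ! 0 = 0 \<and> cyc_des c = D}. cyc_shift ((N - p) mod N) (cyc_shift p c) = c"
    using cyc_shift_cyc_shift p by blast
  show "\<forall>c\<in>{c \<in> perms0 N. c ! 0 = 0 \<and> cyc_des c = D}. cyc_shift p (cyc_shift ((N - p) mod N) c) = c"
    using cyc_shift_cyc_shift[OF _ q(1)] q(2) by force
  show "cyc_shift p ` {c \<in> perms0 N. c ! 0 = 0 \<and> cyc_des c = D}
      \<subseteq> {c \<in> perms0 N. c ! 0 = 0 \<and> cyc_des c = D}"
    using cyc_shift_in_perms0 nth_0_cyc_shift cyc_des_cyc_shift p by auto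
  show "cyc_shift ((N - p) mod N) ` {c \<in> perms0 N. c ! 0 = 0 \<and> cyc_des c = D}
      \<subseteq> {c \<in> perms0 N. c ! 0 = 0 \<and> cyc_des c = D}"
    using cyc_shift_in_perms0 nth_0_cyc_shift cyc_des_cyc_shift q(1) by auto
qed

lemma finite_perms0: "finite (perms0 N)"
proof (rule finite_subset)
  show "perms0 N \<subseteq> {xs. set xs \<subseteq> {..<N} \<and> length xs = N}"
    using perms0_length by (auto simp: perms0_def)
qed (simp add: finite_lists_length_eq)

lemma card_cyc_ballot:
  assumes k: "k \<ge> 1" and N: "N \<ge> 2" "N = k * D"
  shows "D * card {c \<in> perms0 N. c ! 0 = 0 \<and> cyc_des c = D \<and> cyc_ballot k c}
           = card {c \<in> perms0 N. c ! 0 = 0 \<and> cyc_des c = D}"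
proof -
  define C where "C = {c \<in> perms0 N. c ! 0 = 0 \<and> cyc_des c = D}"
  have "finite C" using finite_perms0 by (simp add: C_def)
  have shift_invariant: "card {c \<in> C. cyc_ballot k (cyc_shift p c)} = card {c \<in> C. cyc_ballot k c}"
    if "p < N" for p
    unfolding C_def using card_Collect_bij_betw[OF bij_betw_cyc_shift[OF that]] by simp
  have k_shifts: "card {p \<in> {..<N}. cyc_ballot k (cyc_shift p c)} = k" if "c \<in> C" for c
  proof -
    have c: "c \<in> perms0 N" and N': "N = k * cyc_des c" using that N by (auto simp: C_def)
    have "{p \<in> {..<N}. cyc_ballot k (cyc_shift p c)} = {p. p < N \<and> (\<forall>q<N. q \<noteq> p \<longrightarrow>
        height k c p < height k c q + int k * of_bool (c ! q < c ! p))}"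
      using cyc_ballot_cyc_shift_iff[OF c _ N'] by blast
    then show ?thesis using card_height_records[OF c N(1) N' k] by simp
  qed
  have "N * card {c \<in> C. cyc_ballot k c} = (\<Sum>p<N. card {c \<in> C. cyc_ballot k (cyc_shift p c)})"
    using shift_invariant by simp
  also have "\<dots> = (\<Sum>c\<in>C. card {p \<in> {..<N}. cyc_ballot k (cyc_shift p c)})"
    using \<open>finite C\<close> by (simp add: sum_card_Collect_swap)
  also have "\<dots> = k * card C" using k_shifts by simp
  finally have "k * (D * card {c \<in> C. cyc_ballot k c}) = k * card C"
    unfolding N(2) mult.assoc .
  then have "D * card {c \<in> C. cyc_ballot k c} = card C" using k by simp
  moreover have "{c \<in> C. cyc_ballot k c}
      = {c \<in> perms0 N. c ! 0 = 0 \<and> cyc_des c = D \<and> cyc_ballot k c}" by (auto simp: C_def)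
  ultimately show ?thesis by (simp add: C_def)
qed

lemma perms_length: "w \<in> perms m \<Longrightarrow> length w = m"
  unfolding perms_def by (metis (mono_tags) mem_Collect_eq distinct_card card_atLeastAtMost diff_Suc_1)

lemma length_ad: "length (ad w) = length w - 1"
  unfolding ad_def by simp

lemma count_list_0_add_count_list_1: "set xs \<subseteq> {0, 1 :: nat} \<Longrightarrow> count_list xs 0 + count_list xs 1 = length xs"
  by (induction xs) auto

lemma set_ad: "set (ad w) \<subseteq> {0, 1}"
  unfolding ad_def by auto

lemma ad_nth_eq_1_iff:
  assumes "distinct w" "i + 1 < length w"
  shows "ad w ! i = 1 \<longleftrightarrow> w ! (i + 1) < w ! i"
proof -
  have "w ! i \<noteq> w ! (i + 1)" using assms by (simp add: nth_eq_iff_index_eq)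
  then show ?thesis using assms by (auto simp: ad_def)
qed

lemma count_list_ad_1:
  assumes "distinct w"
  shows "count_list (ad w) 1 = des w"
proof -
  have "count_list (ad w) 1 = card {i. i < length (ad w) \<and> ad w ! i = 1}"
    by (simp add: count_list_eq_length_filter length_filter_conv_card eq_commute)
  also have "{i. i < length (ad w) \<and> ad w ! i = 1} = {i. i + 1 < length w \<and> w ! i > w ! (i + 1)}"
    using ad_nth_eq_1_iff[OF assms] by (auto simp: length_ad)
  finally show ?thesis unfolding des_def .
qed

lemma bij_betw_Cons_0: "bij_betw (Cons 0) (perms m) {c \<in> perms0 (Suc m). c ! 0 = 0}"
proof (rule bij_betw_byWitness[where f' = tl])
  have ranges: "{..<Suc m} = insert 0 {1..m}" "0 \<notin> {1..m}" by auto
  have Cons_tl: "0 # tl c = c" if "c \<in> {c \<in> perms0 (Suc m). c ! 0 = 0}" for c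
    using that perms0_length[of c] by (cases c) auto
  then show "\<forall>c\<in>{c \<in> perms0 (Suc m). c ! 0 = 0}. 0 # tl c = c" by blast
  show "Cons 0 ` perms m \<subseteq> {c \<in> perms0 (Suc m). c ! 0 = 0}"
    unfolding perms_def perms0_def ranges(1) using ranges(2) by force
  show "tl ` {c \<in> perms0 (Suc m). c ! 0 = 0} \<subseteq> perms m"
  proof clarify
    fix c assume c: "c \<in> perms0 (Suc m)" "c ! 0 = 0"
    then have "distinct (0 # tl c)" "set (0 # tl c) = insert 0 {1..m}"
      using Cons_tl[of c] ranges(1) unfolding perms0_def by simp_all
    then have "distinct (tl c)" "set (tl c) = {1..m}"
      using ranges(2) by (simp, metis Diff_insert_absorb distinct.simps(2) list.set(2))
    then show "tl c \<in> perms m" unfolding perms_def by simp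
  qed
qed simp

context
  fixes w :: "nat list" and m :: nat
  assumes w: "w \<in> perms m" and m: "m \<ge> 1"
begin

lemma cyc_nth_Cons_0: "i \<le> m \<Longrightarrow> cyc_nth (0 # w) i = (0 # w) ! i"
  unfolding cyc_nth_def using perms_length[OF w] by simp

lemma cyc_des_upto_Cons_0: "j < m \<Longrightarrow> cyc_des_upto (0 # w) (Suc j) = count_list (take j (ad w)) 1"
proof (induction j)
  case 0
  then show ?case using cyc_nth_Cons_0[of 0] cyc_nth_Cons_0[of 1]
    by (simp add: cyc_des_upto_def cyc_descent_def)
next
  case (Suc j)
  have "cyc_descent (0 # w) (Suc j) \<longleftrightarrow> ad w ! j = 1"
    using Suc.prems w perms_length[OF w] cyc_nth_Cons_0[of "Suc j"] cyc_nth_Cons_0[of "Suc (Suc j)"]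
      ad_nth_eq_1_iff[of w j]
    by (simp add: cyc_descent_def perms_def)
  moreover have "take (Suc j) (ad w) = take j (ad w) @ [ad w ! j]"
    using Suc.prems perms_length[OF w] by (simp add: take_Suc_conv_app_nth length_ad)
  ultimately show ?case using Suc by (auto simp: cyc_des_upto_Suc)
qed

lemma cyc_des_Cons_0: "cyc_des (0 # w) = Suc (des w)"
proof -
  have "w ! (m - 1) \<in> set w" using m perms_length[OF w] by simp
  then have "0 < w ! (m - 1)" using w by (auto simp: perms_def)
  then have last: "cyc_descent (0 # w) m"
    using m perms_length[OF w] cyc_nth_Cons_0[of m] by (simp add: cyc_descent_def cyc_nth_def)
  have "cyc_des_upto (0 # w) m = des w"
    using cyc_des_upto_Cons_0[of "m - 1"] m count_list_ad_1[of w] w perms_length[OF w]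
    by (simp add: length_ad perms_def)
  then show ?thesis
    using last perms_length[OF w] by (simp add: cyc_des_def cyc_des_upto_Suc)
qed

lemma cyc_ballot_Cons_0_iff:
  assumes k: "k \<ge> 1"
  shows "cyc_ballot k (0 # w) \<longleftrightarrow> ballot (k - 1) (ad w)"
proof -
  have step: "0 < height k (0 # w) (Suc j)
      \<longleftrightarrow> (k - 1) * count_list (take j (ad w)) 1 \<le> count_list (take j (ad w)) 0"
    if j: "j < m" for j
  proof -
    define a d where "a = count_list (take j (ad w)) 0" and "d = count_list (take j (ad w)) 1"
    have "a + d = j"
      using count_list_0_add_count_list_1[of "take j (ad w)"] set_ad[of w] set_take_subset[of j "ad w"]
        j perms_length[OF w] unfolding a_def d_def by (simp add: length_ad)
    moreover have "k * d = (k - 1) * d + d" using k by (simp add: diff_mult_distrib)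
    ultimately have "k * d < Suc j \<longleftrightarrow> (k - 1) * d \<le> a" by linarith
    moreover have "0 < height k (0 # w) (Suc j) \<longleftrightarrow> k * d < Suc j"
      unfolding height_def cyc_des_upto_Cons_0[OF j, folded d_def] of_nat_mult[symmetric] by linarith
    ultimately show ?thesis unfolding a_def d_def by simp
  qed
  have "cyc_ballot k (0 # w) \<longleftrightarrow> (\<forall>j<m. 0 < height k (0 # w) (Suc j))"
    unfolding cyc_ballot_def using perms_length[OF w]
    by (auto simp: gr0_conv_Suc)
  also have "\<dots> \<longleftrightarrow> ballot (k - 1) (ad w)"
    unfolding ballot_def length_ad perms_length[OF w] using step m by force
  finally show ?thesis .
qed

end

lemma card_ballot_perms_mult_eq_eulerian:
  assumes k: "k \<ge> 1" and m: "m \<ge> 1" and mn: "Suc m = k * Suc n"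
  shows "Suc n * card {w \<in> perms m. des w = n \<and> ballot (k - 1) (ad w)} = eulerian n m"
proof -
  have transfer: "card {w \<in> perms m. P (0 # w)} = card {c \<in> perms0 (Suc m). c ! 0 = 0 \<and> P c}" for P
    using card_Collect_bij_betw[OF bij_betw_Cons_0, where P = P] by (simp add: conj_assoc)
  have "card {w \<in> perms m. des w = n \<and> ballot (k - 1) (ad w)}
      = card {c \<in> perms0 (Suc m). c ! 0 = 0 \<and> cyc_des c = Suc n \<and> cyc_ballot k c}"
    using transfer[of "\<lambda>c. cyc_des c = Suc n \<and> cyc_ballot k c"] m k
    by (simp add: cyc_des_Cons_0 cyc_ballot_Cons_0_iff cong: conj_cong)
  moreover have "eulerian n m = card {c \<in> perms0 (Suc m). c ! 0 = 0 \<and> cyc_des c = Suc n}"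
    using transfer[of "\<lambda>c. cyc_des c = Suc n"] m
    by (simp add: eulerian_def cyc_des_Cons_0 cong: conj_cong)
  moreover have "Suc m \<ge> 2" using m by simp
  ultimately show ?thesis using card_cyc_ballot[OF k _ mn] by simp
qed

lemma card_ballot_perms:
  assumes "k \<ge> 1"
  shows "real (card {w \<in> perms (k * n + k - 1). des w = n \<and> ballot (k - 1) (ad w)})
           = real (eulerian n (k * n + k - 1)) / real (n + 1)"
proof (cases "k * n + k - 1 = 0")
  case True
  moreover have "n \<le> k * n" using assms by simp
  ultimately have "k = 1" "n = 0" using assms by linarith+
  moreover have "perms 0 = {[]}" by (auto simp: perms_def)
  ultimately show ?thesis by (simp add: eulerian_def des_def ballot_def)
next
  case False
  then have "(n + 1) * card {w \<in> perms (k * n + k - 1). des w = n \<and> ballot (k - 1) (ad w)}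
      = eulerian n (k * n + k - 1)"
    using card_ballot_perms_mult_eq_eulerian[OF assms, of "k * n + k - 1" n] assms by (simp add: algebra_simps)
  then show ?thesis by (simp add: field_simps flip: of_nat_mult)
qed

lemma dyck_perm_iff: "dyck_perm n w \<longleftrightarrow> w \<in> perms (2 * n + 1) \<and> des w = n \<and> ballot 1 (ad w)"
proof (cases "w \<in> perms (2 * n + 1)")
  case True
  then have "count_list (ad w) 0 + count_list (ad w) 1 = 2 * n" "count_list (ad w) 1 = des w"
    using count_list_0_add_count_list_1[OF set_ad, of w] count_list_ad_1[of w]
    by (simp_all add: perms_length length_ad perms_def)
  then show ?thesis
    using True unfolding dyck_perm_def path_point_def ballot_def by auto
qed (simp add: dyck_perm_def)

theorem mainTheorem5:
  fixes k n :: nat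
  assumes "k \<ge> 1"
  shows "real (card {w \<in> perms (k * n + k - 1). des w = n \<and> ballot (k - 1) (ad w)})
           = real (eulerian n (k * n + k - 1)) / real (n + 1)
         \<and> real (card {w. dyck_perm n w}) = real (eulerian n (2 * n + 1)) / real (n + 1)"
proof
  show "real (card {w \<in> perms (k * n + k - 1). des w = n \<and> ballot (k - 1) (ad w)})
      = real (eulerian n (k * n + k - 1)) / real (n + 1)"
    using card_ballot_perms[OF assms] .
  have "{w. dyck_perm n w} = {w \<in> perms (2 * n + 2 - 1). des w = n \<and> ballot (2 - 1) (ad w)}"
    by (simp add: dyck_perm_iff)
  then show "real (card {w. dyck_perm n w}) = real (eulerian n (2 * n + 1)) / real (n + 1)"
    using card_ballot_perms[of 2 n] by simp
qed

end
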